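(* Let $p$ be a prime, let $k,n\in\mathbb{N}$, $s\in[n]$, $t\in[p]$, and $\alpha\in(0,1)$. Let $$\boldsymbol{B}^\alpha_{k,s,\geq t}(n) := \left\{\boldsymbol{v}\in(\mathbb{F}_p+i\mathbb{F}_p)^n : R^\alpha_k(\boldsymbol{v}_I)\geq t\cdot\frac{2^{2k}|I|^{2k}}{p} \text{ for every } I\subseteq[n] \text{ with } |I|\geq s\right\}.$$ Then $$|\boldsymbol{B}^\alpha_{k,s,\geq t}(n)| \leq (\alpha t)^{s-n}p^{n+s}.$$
   Context: $\mathbb{F}_p+i\mathbb{F}_p$ denotes the additive group $\mathbb{F}_p^2$, with elements written $a+ib$ ($a,b\in\mathbb{F}_p$) and componentwise addition. $[n]=\{1,\dots,n\}$. For $I\subseteq[n]$ and $\boldsymbol{v}\in(\mathbb{F}_p+i\mathbb{F}_p)^n$, $\boldsymbol{v}_I$ is the vector $(v_i)_{i\in I}$. For a vector $\boldsymbol{w}=(w_i)_{i\in I}$ indexed by a finite set $I$, $k\in\mathbb{N}$ and $\alpha\in[-1,1]$, $R^\alpha_k(\boldsymbol{w})$ is the number of pairs consisting of a sequence $(i_1,\dots,i_{2k})\in I^{2k}$ and a sign pattern $(\epsilon_1,\dots,\epsilon_{2k})\in\{\pm1\}^{2k}$ such that $\epsilon_1w_{i_1}+\dots+\epsilon_{2k}w_{i_{2k}}=0$ and $|\{i_1,\dots,i_{2k}\}|\geq(1+\alpha)k$. *)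

theory Defs
  imports Complex_Main "HOL-Library.FuncSet" "HOL-Computational_Algebra.Primes"
begin

text \<open>The additive group F_p + i F_p, elements a+ib represented as pairs (a,b)
  of residues in {0..p-1}; addition is componentwise modulo p.\<close>
definition Fpi :: "nat \<Rightarrow> (int \<times> int) set" where
  "Fpi p = {0..<int p} \<times> {0..<int p}"

definition Rcount :: "nat \<Rightarrow> real \<Rightarrow> nat \<Rightarrow> 'a set \<Rightarrow> ('a \<Rightarrow> int \<times> int) \<Rightarrow> nat" where
  "Rcount p \<alpha> k I w = card {(ii, \<epsilon>).
      ii \<in> {0..<2*k} \<rightarrow>\<^sub>E I \<and> \<epsilon> \<in> {0..<2*k} \<rightarrow>\<^sub>E {-1, 1::int} \<and>
      (\<Sum>j<2*k. \<epsilon> j * fst (w (ii j))) mod int p = 0 \<and>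
      (\<Sum>j<2*k. \<epsilon> j * snd (w (ii j))) mod int p = 0 \<and>
      real (card (ii ` {0..<2*k})) \<ge> (1 + \<alpha>) * real k}"

definition Bset :: "nat \<Rightarrow> real \<Rightarrow> nat \<Rightarrow> nat \<Rightarrow> nat \<Rightarrow> nat \<Rightarrow> (nat \<Rightarrow> int \<times> int) set" where
  "Bset p \<alpha> k s t n = {v \<in> {1..n} \<rightarrow>\<^sub>E Fpi p.
      \<forall>I. I \<subseteq> {1..n} \<and> card I \<ge> s \<longrightarrow>
        real (Rcount p \<alpha> k I v) \<ge> real t * 2^(2*k) * real (card I)^(2*k) / real p}"

end

theory Submission
  imports Defs "HOL-Number_Theory.Cong"
begin

text \<open>
  Write B(I) for the vectors on an index set I satisfying the defining condition of
  B^alpha_{k,s,>=t} for all J \<subseteq> I with |J| \<ge> s; we show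
  |B(I)| \<le> (p/(\<alpha> t))^(|I|-s) p^(2s) by induction on |I|.
  A counted pair whose 2k indices take at least (1+\<alpha>)k distinct values has at least
  2\<alpha>k indices occurring exactly once.  Double count the triples (w, pair, i) with
  w \<in> B(I) and i occurring once in the pair: for fixed w there are at least
  2\<alpha>k R(w) \<ge> 2\<alpha>k t 4^k |I|^(2k)/p of them.  For fixed i, the zero-sum condition
  determines w_i from w restricted to I - {i} once the pair is fixed, so there are at most
  |B(I - {i})| 2k |I|^(2k-1) 4^k.  Comparing gives |B(I)| \<le> (p/(\<alpha> t)) max_i |B(I - {i})|.
\<close>

lemma finite_Fpi [simp]: "finite (Fpi p)"
  by (simp add: Fpi_def)

lemma card_Fpi: "card (Fpi p) = p * p"
  by (simp add: Fpi_def card_cartesian_product)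

definition R_pairs ::
    "nat \<Rightarrow> real \<Rightarrow> nat \<Rightarrow> 'a set \<Rightarrow> ('a \<Rightarrow> int \<times> int) \<Rightarrow> ((nat \<Rightarrow> 'a) \<times> (nat \<Rightarrow> int)) set" where
  "R_pairs p \<alpha> k I w = {(ii, \<epsilon>).
      ii \<in> {0..<2*k} \<rightarrow>\<^sub>E I \<and> \<epsilon> \<in> {0..<2*k} \<rightarrow>\<^sub>E {-1, 1::int} \<and>
      (\<Sum>j<2*k. \<epsilon> j * fst (w (ii j))) mod int p = 0 \<and>
      (\<Sum>j<2*k. \<epsilon> j * snd (w (ii j))) mod int p = 0 \<and>
      real (card (ii ` {0..<2*k})) \<ge> (1 + \<alpha>) * real k}"

lemma Rcount_eq_card_R_pairs: "Rcount p \<alpha> k I w = card (R_pairs p \<alpha> k I w)"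
  by (simp add: Rcount_def R_pairs_def)

lemma R_pairs_subset:
  "R_pairs p \<alpha> k I w \<subseteq> ({0..<2*k} \<rightarrow>\<^sub>E I) \<times> ({0..<2*k} \<rightarrow>\<^sub>E {-1, 1::int})"
  by (auto simp: R_pairs_def)

lemma finite_R_pairs: "finite I \<Longrightarrow> finite (R_pairs p \<alpha> k I w)"
  by (rule finite_subset[OF R_pairs_subset]) (auto intro!: finite_PiE)

lemma R_pairs_cong:
  assumes "\<And>x. x \<in> I \<Longrightarrow> w x = w' x"
  shows "R_pairs p \<alpha> k I w = R_pairs p \<alpha> k I w'"
proof -
  have sums_eq: "(\<Sum>j<2*k. \<epsilon> j * f (w (ii j))) = (\<Sum>j<2*k. \<epsilon> j * f (w' (ii j)))"
    if "ii \<in> {0..<2*k} \<rightarrow>\<^sub>E I" for ii and \<epsilon> :: "nat \<Rightarrow> int" and f :: "int \<times> int \<Rightarrow> int"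
    using that assms by (intro sum.cong) (auto simp: PiE_iff)
  show ?thesis
    unfolding R_pairs_def by (auto simp: sums_eq)
qed

definition occurs_once :: "'a set \<Rightarrow> ('a \<Rightarrow> 'b) \<Rightarrow> 'b \<Rightarrow> bool" where
  "occurs_once A f y \<longleftrightarrow> card {x \<in> A. f x = y} = 1"

lemma occurs_onceE:
  assumes "occurs_once A f y"
  obtains x where "x \<in> A" "f x = y" "\<And>x'. x' \<in> A \<Longrightarrow> f x' = y \<Longrightarrow> x' = x"
proof -
  obtain x where "{x' \<in> A. f x' = y} = {x}"
    using assms unfolding occurs_once_def by (rule card_1_singletonE)
  then show ?thesis
    using that by blast
qed

lemma occurs_once_imp_in_image: "occurs_once A f y \<Longrightarrow> y \<in> f ` A"
  by (erule occurs_onceE) blast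

lemma card_image_le_occurs_once:
  assumes "finite A"
  shows "2 * card (f ` A) \<le> card A + card {y \<in> f ` A. occurs_once A f y}"
proof -
  have "card A = card (\<Union>y\<in>f ` A. {x \<in> A. f x = y})"
    by (rule arg_cong[where f = card]) auto
  also have "\<dots> = (\<Sum>y\<in>f ` A. card {x \<in> A. f x = y})"
    using assms by (intro card_UN_disjoint) auto
  finally have card_A: "card A = (\<Sum>y\<in>f ` A. card {x \<in> A. f x = y})" .
  have "2 \<le> card {x \<in> A. f x = y} + (if occurs_once A f y then 1 else 0)" if "y \<in> f ` A" for y
  proof -
    have "{x \<in> A. f x = y} \<noteq> {}"
      using that by blast
    then have "card {x \<in> A. f x = y} \<noteq> 0"
      using assms by simp
    then show ?thesis
      unfolding occurs_once_def by auto
  qed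
  then have "(\<Sum>y\<in>f ` A. 2) \<le> (\<Sum>y\<in>f ` A. card {x \<in> A. f x = y} + (if occurs_once A f y then 1 else 0))"
    by (rule sum_mono)
  then show ?thesis
    using assms by (simp add: sum.distrib card_A sum.If_cases Int_def mult.commute)
qed

lemma R_pairs_card_occurs_once_ge:
  assumes "(ii, \<epsilon>) \<in> R_pairs p \<alpha> k I w"
  shows "2 * \<alpha> * real k \<le> real (card {i \<in> I. occurs_once {0..<2*k} ii i})"
proof -
  have "ii ` {0..<2*k} \<subseteq> I"
    using assms by (auto simp: R_pairs_def)
  then have "{i \<in> I. occurs_once {0..<2*k} ii i} = {i \<in> ii ` {0..<2*k}. occurs_once {0..<2*k} ii i}"
    by (blast dest: occurs_once_imp_in_image)
  moreover have "(1 + \<alpha>) * real k \<le> real (card (ii ` {0..<2*k}))"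
    using assms by (simp add: R_pairs_def)
  moreover have "2 * card (ii ` {0..<2*k}) \<le> 2 * k + card {i \<in> ii ` {0..<2*k}. occurs_once {0..<2*k} ii i}"
    using card_image_le_occurs_once[of "{0..<2*k}" ii] by simp
  ultimately show ?thesis
    by (simp add: algebra_simps)
qed

definition R_pairs_once ::
    "nat \<Rightarrow> real \<Rightarrow> nat \<Rightarrow> 'a set \<Rightarrow> ('a \<Rightarrow> int \<times> int) \<Rightarrow> 'a \<Rightarrow> ((nat \<Rightarrow> 'a) \<times> (nat \<Rightarrow> int)) set" where
  "R_pairs_once p \<alpha> k I w i = {z \<in> R_pairs p \<alpha> k I w. occurs_once {0..<2*k} (fst z) i}"

lemma Rcount_le_sum_card_R_pairs_once:
  assumes "finite I"
  shows "2 * \<alpha> * real k * real (Rcount p \<alpha> k I w)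
           \<le> (\<Sum>i\<in>I. real (card (R_pairs_once p \<alpha> k I w i)))"
proof -
  let ?R = "R_pairs p \<alpha> k I w"
  have "(\<Sum>i\<in>I. card (R_pairs_once p \<alpha> k I w i))
          = (\<Sum>z\<in>?R. card {i \<in> I. occurs_once {0..<2*k} (fst z) i})"
    unfolding R_pairs_once_def card_eq_sum
    by (rule sum.swap_restrict[OF assms finite_R_pairs[OF assms]])
  then have "(\<Sum>i\<in>I. real (card (R_pairs_once p \<alpha> k I w i)))
               = (\<Sum>z\<in>?R. real (card {i \<in> I. occurs_once {0..<2*k} (fst z) i}))"
    unfolding of_nat_sum[symmetric] by (rule arg_cong)
  moreover have "(\<Sum>z\<in>?R. 2 * \<alpha> * real k)
                   \<le> (\<Sum>z\<in>?R. real (card {i \<in> I. occurs_once {0..<2*k} (fst z) i}))"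
    by (intro sum_mono) (metis R_pairs_card_occurs_once_ge prod.collapse)
  ultimately show ?thesis
    by (simp add: Rcount_eq_card_R_pairs mult.commute)
qed

lemma signed_residue_unique:
  fixes a b c r :: int
  assumes "c \<in> {-1, 1}" "a \<in> {0..<int p}" "b \<in> {0..<int p}"
    and "(c * a + r) mod int p = 0" "(c * b + r) mod int p = 0"
  shows "a = b"
proof -
  have "[c * a + r = c * b + r] (mod int p)"
    using assms(4,5) by (simp add: cong_def)
  then have "[c * a = c * b] (mod int p)"
    by (simp add: cong_add_rcancel)
  then have "[c * (c * a) = c * (c * b)] (mod int p)"
    by (rule cong_scalar_left)
  moreover have "c * c = 1"
    using assms(1) by auto
  ultimately have "[a = b] (mod int p)"
    by (simp add: mult.assoc[symmetric])
  then show ?thesis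
    using assms(2,3) cong_less_imp_eq_int[where m = "int p"] by simp
qed

lemma sum_fun_upd_occurs_once:
  fixes ii :: "'i \<Rightarrow> 'a" and u :: "'a \<Rightarrow> 'b"
  assumes "occurs_once A ii i" "finite A"
  obtains j0 where "j0 \<in> A"
    "\<And>(g :: 'i \<Rightarrow> 'b \<Rightarrow> 'c::comm_monoid_add) x. (\<Sum>j\<in>A. g j ((u(i := x)) (ii j))) = g j0 x + (\<Sum>j\<in>A - {j0}. g j (u (ii j)))"
proof -
  obtain j0 where j0: "j0 \<in> A" "ii j0 = i" and unique: "\<And>j. j \<in> A \<Longrightarrow> ii j = i \<Longrightarrow> j = j0"
    using occurs_onceE[OF assms(1)] by blast
  have "(\<Sum>j\<in>A. g j ((u(i := x)) (ii j))) = g j0 x + (\<Sum>j\<in>A - {j0}. g j (u (ii j)))"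
    for g :: "'i \<Rightarrow> 'b \<Rightarrow> 'c" and x
  proof -
    have "(\<Sum>j\<in>A - {j0}. g j ((u(i := x)) (ii j))) = (\<Sum>j\<in>A - {j0}. g j (u (ii j)))"
      using unique by (intro sum.cong) auto
    then show ?thesis
      using j0(2) by (simp add: sum.remove[OF assms(2) j0(1)] fun_upd_same del: fun_upd_apply)
  qed
  then show ?thesis
    using that j0(1) by blast
qed

lemma R_pairs_once_unique_value:
  assumes "z \<in> R_pairs_once p \<alpha> k I (u(i := x)) i" "z \<in> R_pairs_once p \<alpha> k I (u(i := y)) i"
    and "x \<in> Fpi p" "y \<in> Fpi p"
  shows "x = y"
proof -
  obtain ii \<epsilon> where z: "z = (ii, \<epsilon>)"
    by fastforce
  have once: "occurs_once {0..<2*k} ii i" and \<epsilon>: "\<epsilon> \<in> {0..<2*k} \<rightarrow>\<^sub>E {-1, 1}"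
    using assms(1) by (auto simp: z R_pairs_once_def R_pairs_def)
  obtain j0 where j0: "j0 \<in> {0..<2*k}" and split:
    "\<And>(g :: nat \<Rightarrow> int \<times> int \<Rightarrow> int) v. (\<Sum>j\<in>{0..<2*k}. g j ((u(i := v)) (ii j))) = g j0 v + (\<Sum>j\<in>{0..<2*k} - {j0}. g j (u (ii j)))"
    using sum_fun_upd_occurs_once[OF once] by blast
  have sign: "\<epsilon> j0 \<in> {-1, 1}"
    using \<epsilon> j0 by auto
  have zero: "(\<epsilon> j0 * fst v + (\<Sum>j\<in>{0..<2*k} - {j0}. \<epsilon> j * fst (u (ii j)))) mod int p = 0"
    "(\<epsilon> j0 * snd v + (\<Sum>j\<in>{0..<2*k} - {j0}. \<epsilon> j * snd (u (ii j)))) mod int p = 0"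
    if "z \<in> R_pairs_once p \<alpha> k I (u(i := v)) i" for v
  proof -
    have "(\<Sum>j\<in>{0..<2*k}. \<epsilon> j * fst ((u(i := v)) (ii j))) mod int p = 0"
      "(\<Sum>j\<in>{0..<2*k}. \<epsilon> j * snd ((u(i := v)) (ii j))) mod int p = 0"
      using that by (simp_all add: z R_pairs_once_def R_pairs_def atLeast0LessThan del: fun_upd_apply)
    then show "(\<epsilon> j0 * fst v + (\<Sum>j\<in>{0..<2*k} - {j0}. \<epsilon> j * fst (u (ii j)))) mod int p = 0"
      "(\<epsilon> j0 * snd v + (\<Sum>j\<in>{0..<2*k} - {j0}. \<epsilon> j * snd (u (ii j)))) mod int p = 0"
      by (simp_all only: split[of "\<lambda>j a. \<epsilon> j * fst a"] split[of "\<lambda>j a. \<epsilon> j * snd a"])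
  qed
  have "fst x = fst y"
    by (rule signed_residue_unique[OF sign _ _ zero(1)[OF assms(1)] zero(1)[OF assms(2)]])
      (use assms(3,4) in \<open>auto simp: Fpi_def\<close>)
  moreover have "snd x = snd y"
    by (rule signed_residue_unique[OF sign _ _ zero(2)[OF assms(1)] zero(2)[OF assms(2)]])
      (use assms(3,4) in \<open>auto simp: Fpi_def\<close>)
  ultimately show ?thesis
    by (simp add: prod_eq_iff)
qed

lemma card_PiE_fixed_value:
  assumes "finite A" "a \<in> A" "b \<in> B"
  shows "card {f \<in> A \<rightarrow>\<^sub>E B. f a = b} = card B ^ (card A - 1)"
proof -
  have "{f \<in> A \<rightarrow>\<^sub>E B. f a = b} = (\<Pi>\<^sub>E a'\<in>A. if a' = a then {b} else B)"
    using assms by (auto simp: PiE_iff extensional_def split: if_splits)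
  then have "card {f \<in> A \<rightarrow>\<^sub>E B. f a = b} = (\<Prod>a'\<in>A. card (if a' = a then {b} else B))"
    using assms(1) by (simp add: card_PiE)
  also have "\<dots> = (\<Prod>a'\<in>A - {a}. card B)"
    using assms by (subst prod.remove[of _ a]) (auto intro!: prod.cong)
  also have "\<dots> = card B ^ (card A - 1)"
    using assms by simp
  finally show ?thesis .
qed

lemma sum_card_R_pairs_once_le:
  assumes "finite I" "i \<in> I"
  shows "(\<Sum>x\<in>Fpi p. card (R_pairs_once p \<alpha> k I (u(i := x)) i))
           \<le> 2 * k * card I ^ (2*k - 1) * 2 ^ (2*k)"
proof -
  define hits where "hits = {ii \<in> {0..<2*k} \<rightarrow>\<^sub>E I. \<exists>j\<in>{0..<2*k}. ii j = i}"
  define signs where "signs = {0..<2*k} \<rightarrow>\<^sub>E {-1, 1::int}"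
  have finite: "finite hits" "finite signs"
    unfolding hits_def signs_def using assms(1) by (simp_all add: finite_PiE)
  have card_signs: "card signs = 2 ^ (2*k)"
    unfolding signs_def by (simp add: card_funcsetE numeral_2_eq_2)
  have disjoint: "R_pairs_once p \<alpha> k I (u(i := x)) i \<inter> R_pairs_once p \<alpha> k I (u(i := y)) i = {}"
    if "x \<in> Fpi p" "y \<in> Fpi p" "x \<noteq> y" for x y
    using R_pairs_once_unique_value[of _ p \<alpha> k I u i x y] that by blast
  have "finite (R_pairs_once p \<alpha> k I w i)" for w
    unfolding R_pairs_once_def using finite_R_pairs[OF assms(1)] by simp
  then have "(\<Sum>x\<in>Fpi p. card (R_pairs_once p \<alpha> k I (u(i := x)) i))
          = card (\<Union>x\<in>Fpi p. R_pairs_once p \<alpha> k I (u(i := x)) i)"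
    by (intro card_UN_disjoint[symmetric]) (simp_all add: disjoint)
  also have "\<dots> \<le> card (hits \<times> signs)"
  proof (rule card_mono)
    show "finite (hits \<times> signs)"
      using finite by simp
    show "(\<Union>x\<in>Fpi p. R_pairs_once p \<alpha> k I (u(i := x)) i) \<subseteq> hits \<times> signs"
    proof
      fix z
      assume "z \<in> (\<Union>x\<in>Fpi p. R_pairs_once p \<alpha> k I (u(i := x)) i)"
      then have "fst z \<in> {0..<2*k} \<rightarrow>\<^sub>E I" "snd z \<in> signs" "i \<in> fst z ` {0..<2*k}"
        by (auto simp: R_pairs_once_def R_pairs_def signs_def dest!: occurs_once_imp_in_image)
      then show "z \<in> hits \<times> signs"
        by (auto simp: hits_def mem_Times_iff)
    qed
  qed
  also have "\<dots> = card hits * 2 ^ (2*k)"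
    by (simp add: card_cartesian_product card_signs)
  also have "card hits \<le> 2 * k * card I ^ (2*k - 1)"
  proof -
    have "hits = (\<Union>j\<in>{0..<2*k}. {ii \<in> {0..<2*k} \<rightarrow>\<^sub>E I. ii j = i})"
      by (auto simp: hits_def)
    then have "card hits \<le> (\<Sum>j\<in>{0..<2*k}. card {ii \<in> {0..<2*k} \<rightarrow>\<^sub>E I. ii j = i})"
      by (simp add: card_UN_le)
    also have "\<dots> = (\<Sum>j\<in>{0..<2*k}. card I ^ (2*k - 1))"
      using assms(2) by (intro sum.cong) (simp_all add: card_PiE_fixed_value)
    finally show ?thesis
      by simp
  qed
  finally show ?thesis
    by simp
qed

definition B_on :: "nat \<Rightarrow> real \<Rightarrow> nat \<Rightarrow> nat \<Rightarrow> nat \<Rightarrow> 'a set \<Rightarrow> ('a \<Rightarrow> int \<times> int) set" where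
  "B_on p \<alpha> k s t I = {v \<in> I \<rightarrow>\<^sub>E Fpi p.
      \<forall>J. J \<subseteq> I \<and> card J \<ge> s \<longrightarrow>
        real (Rcount p \<alpha> k J v) \<ge> real t * 2^(2*k) * real (card J)^(2*k) / real p}"

lemma Bset_eq_B_on: "Bset p \<alpha> k s t n = B_on p \<alpha> k s t {1..n}"
  unfolding Bset_def B_on_def ..

lemma B_on_subset_PiE: "B_on p \<alpha> k s t I \<subseteq> I \<rightarrow>\<^sub>E Fpi p"
  by (auto simp: B_on_def)

lemma finite_B_on: "finite I \<Longrightarrow> finite (B_on p \<alpha> k s t I)"
  by (rule finite_subset[OF B_on_subset_PiE]) (simp add: finite_PiE)

lemma B_on_Rcount_ge:
  assumes "w \<in> B_on p \<alpha> k s t I" "J \<subseteq> I" "s \<le> card J"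
  shows "real t * 2^(2*k) * real (card J)^(2*k) / real p \<le> real (Rcount p \<alpha> k J w)"
  using assms by (auto simp: B_on_def)

lemma restrict_in_B_on:
  assumes "w \<in> B_on p \<alpha> k s t I"
  shows "restrict w (I - {i}) \<in> B_on p \<alpha> k s t (I - {i})"
proof -
  have "Rcount p \<alpha> k J (restrict w (I - {i})) = Rcount p \<alpha> k J w" if "J \<subseteq> I - {i}" for J
    unfolding Rcount_eq_card_R_pairs using that by (subst R_pairs_cong) auto
  moreover have "w \<in> I \<rightarrow>\<^sub>E Fpi p"
    using assms B_on_subset_PiE by blast
  then have "restrict w (I - {i}) \<in> (I - {i}) \<rightarrow>\<^sub>E Fpi p"
    by (auto simp: PiE_iff)
  ultimately show ?thesis
    using B_on_Rcount_ge[OF assms] unfolding B_on_def by auto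
qed

lemma sum_B_on_card_R_pairs_once_le:
  assumes "finite I" "i \<in> I"
  shows "(\<Sum>w\<in>B_on p \<alpha> k s t I. card (R_pairs_once p \<alpha> k I w i))
           \<le> card (B_on p \<alpha> k s t (I - {i})) * (2 * k * card I ^ (2*k - 1) * 2 ^ (2*k))"
proof -
  let ?B' = "B_on p \<alpha> k s t (I - {i})"
  let ?upd = "\<lambda>(x, u). u(i := x)"
  let ?f = "\<lambda>w. card (R_pairs_once p \<alpha> k I w i)"
  have finite: "finite (Fpi p \<times> ?B')"
    using assms(1) by (simp add: finite_B_on)
  have "B_on p \<alpha> k s t I \<subseteq> ?upd ` (Fpi p \<times> ?B')"
  proof
    fix w
    assume w: "w \<in> B_on p \<alpha> k s t I"
    then have "w \<in> I \<rightarrow>\<^sub>E Fpi p"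
      using B_on_subset_PiE by blast
    then have "w = ?upd (w i, restrict w (I - {i}))" "w i \<in> Fpi p"
      using assms(2) by (auto simp: PiE_iff extensional_def fun_eq_iff)
    then show "w \<in> ?upd ` (Fpi p \<times> ?B')"
      using restrict_in_B_on[OF w] by blast
  qed
  then have "(\<Sum>w\<in>B_on p \<alpha> k s t I. ?f w) \<le> (\<Sum>w\<in>?upd ` (Fpi p \<times> ?B'). ?f w)"
    using finite by (intro sum_mono2) auto
  also have "\<dots> = (\<Sum>(x, u)\<in>Fpi p \<times> ?B'. ?f (u(i := x)))"
  proof (rule sum.reindex[THEN trans])
    have "inj_on ?upd (Fpi p \<times> ((I - {i}) \<rightarrow>\<^sub>E Fpi p))"
      by (rule inj_combinator) simp
    then show "inj_on ?upd (Fpi p \<times> ?B')"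
      by (rule inj_on_subset) (use B_on_subset_PiE in blast)
  qed (simp add: case_prod_beta)
  also have "\<dots> = (\<Sum>x\<in>Fpi p. \<Sum>u\<in>?B'. ?f (u(i := x)))"
    by (simp only: sum.cartesian_product)
  also have "\<dots> = (\<Sum>u\<in>?B'. \<Sum>x\<in>Fpi p. ?f (u(i := x)))"
    by (rule sum.swap)
  also have "\<dots> \<le> (\<Sum>u\<in>?B'. 2 * k * card I ^ (2*k - 1) * 2 ^ (2*k))"
    using sum_card_R_pairs_once_le[OF assms] by (rule sum_mono)
  finally show ?thesis
    by simp
qed

lemma B_on_sum_card_R_pairs_once_ge:
  assumes "w \<in> B_on p \<alpha> k s t I" "finite I" "s \<le> card I" "0 \<le> \<alpha>"
  shows "2 * \<alpha> * real k * (real t * 2^(2*k) * real (card I)^(2*k) / real p)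
           \<le> (\<Sum>i\<in>I. real (card (R_pairs_once p \<alpha> k I w i)))"
proof -
  have "2 * \<alpha> * real k * (real t * 2^(2*k) * real (card I)^(2*k) / real p)
          \<le> 2 * \<alpha> * real k * real (Rcount p \<alpha> k I w)"
    using B_on_Rcount_ge[OF assms(1) order_refl assms(3)] assms(4) by (intro mult_left_mono) simp_all
  also have "\<dots> \<le> (\<Sum>i\<in>I. real (card (R_pairs_once p \<alpha> k I w i)))"
    by (rule Rcount_le_sum_card_R_pairs_once[OF assms(2)])
  finally show ?thesis .
qed

lemma card_B_on_le_step:
  fixes M :: real
  assumes "0 < p" "0 < \<alpha>" "0 < t" "1 \<le> k" "finite I" "I \<noteq> {}" "s \<le> card I"
    and IH: "\<And>i. i \<in> I \<Longrightarrow> real (card (B_on p \<alpha> k s t (I - {i}))) \<le> M"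
  shows "real (card (B_on p \<alpha> k s t I)) \<le> M * real p / (\<alpha> * real t)"
proof -
  define N where "N = card I"
  define K where "K = 2 * k * N ^ (2*k - 1) * 2 ^ (2*k)"
  define Q :: real where "Q = 2 * real k * 2 ^ (2*k) * real N ^ (2*k)"
  let ?B = "B_on p \<alpha> k s t I"
  let ?f = "\<lambda>w i. real (card (R_pairs_once p \<alpha> k I w i))"
  have "0 < N"
    using assms(5,6) by (simp add: N_def card_gt_0_iff)
  then have "0 < Q"
    using assms(4) by (simp add: Q_def)
  have NK: "real N * real K = Q"
  proof -
    have "2 * k = Suc (2 * k - 1)"
      using assms(4) by simp
    then have "real N * real N ^ (2*k - 1) = real N ^ (2*k)"
      by (metis power_Suc)
    then show ?thesis
      by (simp add: K_def Q_def ac_simps)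
  qed
  have lower: "Q * (\<alpha> * real t / real p) \<le> (\<Sum>i\<in>I. ?f w i)" if "w \<in> ?B" for w
    using B_on_sum_card_R_pairs_once_ge[OF that assms(5,7)] assms(2)
    by (simp add: Q_def N_def mult_ac)
  have per_index: "(\<Sum>w\<in>?B. ?f w i) \<le> M * real K" if i: "i \<in> I" for i
  proof -
    have "(\<Sum>w\<in>?B. ?f w i) \<le> real (card (B_on p \<alpha> k s t (I - {i}))) * real K"
      using sum_B_on_card_R_pairs_once_le[OF assms(5) i, of p \<alpha> k s t]
      unfolding K_def N_def of_nat_sum[symmetric] of_nat_mult[symmetric] of_nat_le_iff .
    also have "\<dots> \<le> M * real K"
      using IH[OF i] by (rule mult_right_mono) simp
    finally show ?thesis .
  qed
  have "real (card ?B) * (Q * (\<alpha> * real t / real p)) = (\<Sum>w\<in>?B. Q * (\<alpha> * real t / real p))"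
    by simp
  also have "\<dots> \<le> (\<Sum>w\<in>?B. \<Sum>i\<in>I. ?f w i)"
    using lower by (rule sum_mono)
  also have "\<dots> = (\<Sum>i\<in>I. \<Sum>w\<in>?B. ?f w i)"
    by (rule sum.swap)
  also have "\<dots> \<le> (\<Sum>i\<in>I. M * real K)"
    using per_index by (rule sum_mono)
  also have "\<dots> = M * Q"
    by (simp add: NK[symmetric] N_def)
  finally have "(real (card ?B) * (\<alpha> * real t / real p)) * Q \<le> M * Q"
    by (simp add: ac_simps)
  then have "real (card ?B) * (\<alpha> * real t / real p) \<le> M"
    using \<open>0 < Q\<close> by (rule mult_right_le_imp_le)
  then show ?thesis
    using assms(1-3) by (simp add: field_simps)
qed

lemma card_B_on_le:
  assumes "0 < p" "0 < \<alpha>" "0 < t" "1 \<le> k" "finite I" "s \<le> card I"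
  shows "real (card (B_on p \<alpha> k s t I)) \<le> (real p / (\<alpha> * real t)) ^ (card I - s) * real p ^ (2 * s)"
  using assms(5,6)
proof (induction "card I - s" arbitrary: I)
  case 0
  then have "card I = s"
    by simp
  have "card (B_on p \<alpha> k s t I) \<le> card (I \<rightarrow>\<^sub>E Fpi p)"
    using 0 by (intro card_mono B_on_subset_PiE) (simp add: finite_PiE)
  also have "\<dots> = (p * p) ^ s"
    using 0 by (simp add: card_funcsetE card_Fpi)
  finally have "real (card (B_on p \<alpha> k s t I)) \<le> real ((p * p) ^ s)"
    by (simp only: of_nat_le_iff)
  then show ?case
    by (simp add: \<open>card I = s\<close> power_mult power2_eq_square)
next
  case (Suc d)
  then have "I \<noteq> {}"
    by auto
  have IH: "real (card (B_on p \<alpha> k s t (I - {i}))) \<le> (real p / (\<alpha> * real t)) ^ d * real p ^ (2 * s)"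
    if "i \<in> I" for i
  proof -
    have "card (I - {i}) = card I - 1"
      using Suc.prems(1) that by simp
    then have "d = card (I - {i}) - s" "s \<le> card (I - {i})"
      using Suc.hyps(2) by simp_all
    then show ?thesis
      using Suc.hyps(1)[of "I - {i}"] Suc.prems(1) by simp
  qed
  have "real (card (B_on p \<alpha> k s t I)) \<le> (real p / (\<alpha> * real t)) ^ d * real p ^ (2 * s) * real p / (\<alpha> * real t)"
    by (rule card_B_on_le_step[OF assms(1-4) Suc.prems(1) \<open>I \<noteq> {}\<close> Suc.prems(2) IH])
  also have "\<dots> = (real p / (\<alpha> * real t)) ^ (card I - s) * real p ^ (2 * s)"
    by (simp add: Suc.hyps(2)[symmetric])
  finally show ?case .
qed

theorem theorem5p2:
  fixes p k n s t :: nat and \<alpha> :: real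
  assumes "prime p" and "k \<ge> 1" and "1 \<le> s" and "s \<le> n" and "1 \<le> t" and "t \<le> p"
    and "0 < \<alpha>" and "\<alpha> < 1"
  shows "real (card (Bset p \<alpha> k s t n))
           \<le> (\<alpha> * real t) powr (real s - real n) * real p ^ (n + s)"
proof -
  have "0 < p"
    using assms(1) by (rule prime_gt_0_nat)
  then have "real (card (Bset p \<alpha> k s t n)) \<le> (real p / (\<alpha> * real t)) ^ (n - s) * real p ^ (2 * s)"
    using card_B_on_le[of p \<alpha> t k "{1..n}" s] assms by (simp add: Bset_eq_B_on)
  also have "\<dots> = (\<alpha> * real t) powr (real s - real n) * real p ^ (n + s)"
  proof -
    have "(\<alpha> * real t) powr (real s - real n) = inverse ((\<alpha> * real t) ^ (n - s))"
      using assms(4,5,7) by (simp add: powr_minus[symmetric] powr_realpow[symmetric] of_nat_diff)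
    moreover have "real p ^ (n + s) = real p ^ (n - s) * real p ^ (2 * s)"
      using assms(4) by (simp flip: power_add add: add.commute)
    ultimately show ?thesis
      by (simp add: power_divide field_simps)
  qed
  finally show ?thesis .
qed

end
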